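(* Let $X$ be a reflexive complex Banach space, let $A$ be a positive self-adjoint operator from $X$ to $X^\ast$, and let $E$ be a bounded linear operator on $X$ such that $E(\operatorname{dom}A)\subseteq\operatorname{dom}A$ and $E^\ast A\subseteq AE$. Then the assignment $\hat E(Ax):=AEx$ ($x\in\operatorname{dom}A$) gives a well-defined linear operator $\hat E$ on $\operatorname{ran}A$, and $\hat E$ is bounded with respect to the norm of $H_A$.
   Context: $X^\ast$ denotes the conjugate dual of $X$ (continuous conjugate-linear functionals on $X$); $X$ is identified with $X^{\ast\ast}$. For $v\in X^\ast$, $x\in X$ write $(v,x):=v(x)$ and $(x,v):=\overline{v(x)}$. An operator $A$ from $X$ to $X^\ast$ is positive if $(Ax,x)\ge0$ for all $x\in\operatorname{dom}A$; its adjoint $A^\ast$ has domain $\{y\in X:x\mapsto(Ax,y)\text{ continuous on }\operatorname{dom}A\}$ and is determined by $(x,A^\ast y)=(Ax,y)$; $A$ is self-adjoint if $A=A^\ast$. For a bounded operator $E$ on $X$, $E^\ast$ is the bounded operator on $X^\ast$ with $(E^\ast v,x)=(v,Ex)$. $H_A$ is the completion of $\operatorname{ran}A$ with respect to the inner product $[Ax,Ay]_A:=(Ax,y)$ (well defined and positive definite on $\operatorname{ran}A$). *)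

theory Defs
  imports "HOL-Analysis.Analysis"
begin

text \<open>A complex Banach space is modelled as a real Banach space (type class banach)
  together with a complex scalar multiplication sm extending the real one and
  compatible with the norm.\<close>

definition complex_scaling :: "(complex \<Rightarrow> 'a::real_normed_vector \<Rightarrow> 'a) \<Rightarrow> bool" where
  "complex_scaling sm \<longleftrightarrow>
     (\<forall>c x y. sm c (x + y) = sm c x + sm c y) \<and>
     (\<forall>a b x. sm (a + b) x = sm a x + sm b x) \<and>
     (\<forall>a b x. sm (a * b) x = sm a (sm b x)) \<and>
     (\<forall>r x. sm (complex_of_real r) x = r *\<^sub>R x) \<and>
     (\<forall>c x. norm (sm c x) = cmod c * norm x)"

definition cdual :: "(complex \<Rightarrow> 'a::real_normed_vector \<Rightarrow> 'a) \<Rightarrow> ('a \<Rightarrow> complex) set" where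
  "cdual sm = {v. (\<forall>x y. v (x + y) = v x + v y) \<and> (\<forall>c x. v (sm c x) = cnj c * v x) \<and>
                  (\<exists>K. \<forall>x. cmod (v x) \<le> K * norm x)}"

definition dnorm :: "('a::real_normed_vector \<Rightarrow> complex) \<Rightarrow> real" where
  "dnorm v = Sup ((\<lambda>x. cmod (v x)) ` {x. norm x \<le> 1})"

text \<open>Reflexivity: every continuous conjugate-linear functional on the conjugate dual is
  of the form v \<mapsto> (x, v) = cnj (v x), i.e. the canonical map X \<rightarrow> X** is onto.\<close>

definition reflexive_space :: "(complex \<Rightarrow> 'a::real_normed_vector \<Rightarrow> 'a) \<Rightarrow> bool" where
  "reflexive_space sm \<longleftrightarrow>
     (\<forall>\<phi> :: ('a \<Rightarrow> complex) \<Rightarrow> complex.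
        (\<forall>v\<in>cdual sm. \<forall>w\<in>cdual sm. \<phi> (\<lambda>x. v x + w x) = \<phi> v + \<phi> w) \<longrightarrow>
        (\<forall>v\<in>cdual sm. \<forall>c. \<phi> (\<lambda>x. c * v x) = cnj c * \<phi> v) \<longrightarrow>
        (\<exists>K. \<forall>v\<in>cdual sm. cmod (\<phi> v) \<le> K * dnorm v) \<longrightarrow>
        (\<exists>x. \<forall>v\<in>cdual sm. \<phi> v = cnj (v x)))"

definition lin_op_dual :: "(complex \<Rightarrow> 'a::real_normed_vector \<Rightarrow> 'a) \<Rightarrow> 'a set \<Rightarrow> ('a \<Rightarrow> 'a \<Rightarrow> complex) \<Rightarrow> bool" where
  "lin_op_dual sm D A \<longleftrightarrow>
     0 \<in> D \<and> (\<forall>x\<in>D. \<forall>y\<in>D. x + y \<in> D) \<and> (\<forall>c. \<forall>x\<in>D. sm c x \<in> D) \<and>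
     (\<forall>x\<in>D. A x \<in> cdual sm) \<and>
     (\<forall>x\<in>D. \<forall>y\<in>D. A (x + y) = (\<lambda>z. A x z + A y z)) \<and>
     (\<forall>c. \<forall>x\<in>D. A (sm c x) = (\<lambda>z. c * A x z))"

definition positive_op :: "'a set \<Rightarrow> ('a \<Rightarrow> 'a \<Rightarrow> complex) \<Rightarrow> bool" where
  "positive_op D A \<longleftrightarrow> (\<forall>x\<in>D. Im (A x x) = 0 \<and> Re (A x x) \<ge> 0)"

text \<open>Graph of the adjoint A*: pairs (y, w), w \<in> X*, with (x, w) = (Ax, y) for all x in dom A,
  i.e. cnj (w x) = A x y.  (Its domain consists exactly of the y for which x \<mapsto> (Ax,y) is
  continuous on dom A, by Hahn-Banach.)  Self-adjointness A = A* is equality of graphs.\<close>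

definition adjoint_graph :: "(complex \<Rightarrow> 'a::real_normed_vector \<Rightarrow> 'a) \<Rightarrow> 'a set \<Rightarrow> ('a \<Rightarrow> 'a \<Rightarrow> complex) \<Rightarrow> ('a \<times> ('a \<Rightarrow> complex)) set" where
  "adjoint_graph sm D A = {(y, w). w \<in> cdual sm \<and> (\<forall>x\<in>D. cnj (w x) = A x y)}"

definition self_adjoint_op :: "(complex \<Rightarrow> 'a::real_normed_vector \<Rightarrow> 'a) \<Rightarrow> 'a set \<Rightarrow> ('a \<Rightarrow> 'a \<Rightarrow> complex) \<Rightarrow> bool" where
  "self_adjoint_op sm D A \<longleftrightarrow> adjoint_graph sm D A = {(x, A x) | x. x \<in> D}"

definition bounded_clinear_op :: "(complex \<Rightarrow> 'a::real_normed_vector \<Rightarrow> 'a) \<Rightarrow> ('a \<Rightarrow> 'a) \<Rightarrow> bool" where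
  "bounded_clinear_op sm E \<longleftrightarrow> bounded_linear E \<and> (\<forall>c x. E (sm c x) = sm c (E x))"

text \<open>Norm of H_A on ran A: \<parallel>Ax\<parallel>_A = sqrt (Ax, x).\<close>

definition HA_norm :: "('a \<Rightarrow> 'a \<Rightarrow> complex) \<Rightarrow> 'a \<Rightarrow> real" where
  "HA_norm A x = sqrt (Re (A x x))"

end

theory Submission
  imports Defs
begin

text \<open>Write \<open>Eh u = u \<circ> E\<close>; the hypothesis \<open>E\<^sup>* A \<subseteq> A E\<close> says exactly that
  \<open>Eh (A x) = A (E x)\<close>, so well-definedness and linearity are free. For the bound, fix
  \<open>x \<in> dom A\<close> and put \<open>a k = (A E\<^sup>k x, E\<^sup>k x)\<close>. The intertwining relation makes \<open>E\<close>
  symmetric for the form \<open>(A p, q)\<close>, so Cauchy-Schwarz gives \<open>a (k+1)\<^sup>2 \<le> a k * a (k+2)\<close>: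
  the ratios \<open>a (k+1) / a k\<close> increase and \<open>a k \<ge> (a 1 / a 0)\<^sup>k * a 0\<close>. On the other hand
  \<open>a k = (A x, E\<^sup>2\<^sup>k x) = O(\<parallel>E\<parallel>\<^sup>2\<^sup>k)\<close>, hence \<open>a 1 \<le> \<parallel>E\<parallel>\<^sup>2 * a 0\<close>.\<close>

lemma nonneg_quadratic_discriminant:
  fixes a b w :: real
  assumes nonneg: "\<And>t. 0 \<le> a + 2*t*w + t^2*b" and "0 \<le> b"
  shows "w^2 \<le> a*b"
proof (cases "b > 0")
  case True
  have "0 \<le> a + 2*(-w/b)*w + (-w/b)^2*b" using nonneg .
  also have "\<dots> = a - w^2/b" using True by (simp add: power2_eq_square field_simps)
  finally show ?thesis using True by (simp add: field_simps mult.commute)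
next
  case False
  then have b0: "b = 0" using \<open>0 \<le> b\<close> by simp
  show ?thesis
  proof (cases "w = 0")
    case True then show ?thesis using b0 by simp
  next
    case False
    have "0 \<le> a + 2*(-(a+1)/(2*w))*w + (-(a+1)/(2*w))^2*b" using nonneg .
    also have "\<dots> = -1" using False b0 by (simp add: field_simps)
    finally show ?thesis by simp
  qed
qed

lemma log_convex_ratio_mono:
  fixes a :: "nat \<Rightarrow> real"
  assumes conv: "\<And>n. (a (Suc n))^2 \<le> a n * a (Suc (Suc n))"
    and a0: "0 < a 0" and a1: "0 < a 1"
  shows "0 < a n \<and> a 1 / a 0 * a n \<le> a (Suc n)"
proof (induction n)
  case 0
  show ?case using a0 by simp
next
  case (Suc n)
  let ?r = "a 1 / a 0"
  have an: "0 < a n" and step: "?r * a n \<le> a (Suc n)" using Suc.IH by auto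
  have "0 < ?r" using a0 a1 by simp
  then have an1: "0 < a (Suc n)" using mult_pos_pos[OF _ an] step by fastforce
  have "a n * (?r * a (Suc n)) \<le> a (Suc n) * a (Suc n)"
    using mult_right_mono[OF step less_imp_le[OF an1]] by (simp add: algebra_simps)
  also have "\<dots> \<le> a n * a (Suc (Suc n))" using conv[of n] by (simp add: power2_eq_square)
  finally have "?r * a (Suc n) \<le> a (Suc (Suc n))"
    by (rule mult_le_cancel_left_pos[OF an, THEN iffD1])
  then show ?case using an1 by simp
qed

lemma log_convex_geometric_lower_bound:
  fixes a :: "nat \<Rightarrow> real"
  assumes conv: "\<And>n. (a (Suc n))^2 \<le> a n * a (Suc (Suc n))"
    and a0: "0 < a 0" and a1: "0 < a 1"
  shows "(a 1 / a 0)^n * a 0 \<le> a n"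
proof (induction n)
  case (Suc n)
  have "0 \<le> a 1 / a 0" using a0 a1 by simp
  have "(a 1 / a 0)^Suc n * a 0 = a 1 / a 0 * ((a 1 / a 0)^n * a 0)" by simp
  also have "\<dots> \<le> a 1 / a 0 * a n" using Suc.IH \<open>0 \<le> a 1 / a 0\<close> by (rule mult_left_mono)
  also have "\<dots> \<le> a (Suc n)" using log_convex_ratio_mono[OF conv a0 a1] by blast
  finally show ?case .
qed simp

lemma log_convex_ratio_le_growth_rate:
  fixes a :: "nat \<Rightarrow> real"
  assumes nonneg: "\<And>n. 0 \<le> a n"
    and conv: "\<And>n. (a (Suc n))^2 \<le> a n * a (Suc (Suc n))"
    and growth: "\<And>n. a n \<le> C * q^n" and q: "0 < q"
  shows "a 1 \<le> q * a 0"
proof (cases "a 1 = 0")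
  case True
  then show ?thesis using nonneg[of 0] q by simp
next
  case False
  then have a1: "0 < a 1" using nonneg[of 1] by simp
  have a0: "0 < a 0"
  proof (rule ccontr)
    assume "\<not> 0 < a 0"
    then have "(a 1)^2 \<le> 0" using conv[of 0] nonneg[of 0] by simp
    then show False using a1 by simp
  qed
  show ?thesis
  proof (rule ccontr)
    assume "\<not> a 1 \<le> q * a 0"
    then have "1 < a 1 / a 0 / q" using a0 q by (simp add: field_simps)
    then obtain n where n: "C / a 0 < (a 1 / a 0 / q)^n" using real_arch_pow by blast
    have "(a 1 / a 0)^n * a 0 \<le> C * q^n"
      using log_convex_geometric_lower_bound[OF conv a0 a1] growth order_trans by blast
    then have "(a 1 / a 0 / q)^n \<le> C / a 0" using a0 q by (simp add: power_divide field_simps)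
    then show False using n by simp
  qed
qed

lemma positive_op_cauchy_schwarz:
  assumes lin: "lin_op_dual sm D A" and pos: "positive_op D A"
    and u: "u \<in> D" and v: "v \<in> D" and sym: "A u v = A v u"
  shows "(Re (A u v))^2 \<le> Re (A u u) * Re (A v v)"
proof (rule nonneg_quadratic_discriminant)
  show "0 \<le> Re (A v v)" using pos v unfolding positive_op_def by blast
  fix t :: real
  let ?c = "complex_of_real t"
  have sv: "sm ?c v \<in> D" and w: "u + sm ?c v \<in> D"
    using lin u v unfolding lin_op_dual_def by blast+
  have "A (u + sm ?c v) = (\<lambda>z. A u z + ?c * A v z)"
    using lin u v sv unfolding lin_op_dual_def by auto
  moreover have "A u \<in> cdual sm" "A v \<in> cdual sm" using lin u v unfolding lin_op_dual_def by auto
  ultimately have "A (u + sm ?c v) (u + sm ?c v) = A u u + ?c * A u v + ?c * A v u + ?c*?c * A v v"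
    unfolding cdual_def by (simp add: algebra_simps)
  moreover have "0 \<le> Re (A (u + sm ?c v) (u + sm ?c v))" using pos w unfolding positive_op_def by blast
  ultimately show "0 \<le> Re (A u u) + 2*t*Re (A u v) + t^2 * Re (A v v)"
    using sym by (simp add: power2_eq_square algebra_simps)
qed

context
  fixes sm :: "complex \<Rightarrow> 'a::real_normed_vector \<Rightarrow> 'a"
    and D :: "'a set" and A :: "'a \<Rightarrow> 'a \<Rightarrow> complex" and E :: "'a \<Rightarrow> 'a"
  assumes lin: "lin_op_dual sm D A" and pos: "positive_op D A"
    and invariant: "E ` D \<subseteq> D"
    and intertwine: "\<And>x z. x \<in> D \<Longrightarrow> A x (E z) = A (E x) z"
begin

lemma funpow_invariant: "x \<in> D \<Longrightarrow> (E^^k) x \<in> D"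
  using invariant by (induction k) auto

lemma funpow_intertwine:
  assumes "p \<in> D" "q \<in> D"
  shows "A ((E^^k) p) q = A p ((E^^k) q)"
  using assms(2)
proof (induction k arbitrary: q)
  case (Suc k)
  have "A ((E^^Suc k) p) q = A ((E^^k) p) (E q)"
    using intertwine[OF funpow_invariant[OF assms(1)]] by simp
  also have "\<dots> = A p ((E^^Suc k) q)"
    using Suc invariant by (auto simp: funpow_swap1)
  finally show ?case .
qed simp

lemma quadratic_form_funpow_log_convex:
  assumes x: "x \<in> D"
  defines "a \<equiv> \<lambda>k. Re (A ((E^^k) x) ((E^^k) x))"
  shows "(a (Suc n))^2 \<le> a n * a (Suc (Suc n))"
proof -
  let ?u = "(E^^n) x" and ?v = "(E^^Suc (Suc n)) x"
  have u: "?u \<in> D" and v: "?v \<in> D" using funpow_invariant[OF x] by blast+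
  have v_eq: "?v = (E^^2) ?u" by (simp add: numeral_2_eq_2)
  have middle: "A ?u ?v = A ((E^^Suc n) x) ((E^^Suc n) x)"
    using intertwine[OF u] by (simp add: v_eq numeral_2_eq_2)
  have "A ?u ?v = A ?v ?u" using funpow_intertwine[OF u u, of 2] v_eq by simp
  then have "(Re (A ?u ?v))^2 \<le> Re (A ?u ?u) * Re (A ?v ?v)"
    using positive_op_cauchy_schwarz[OF lin pos u v] by blast
  then show ?thesis using middle unfolding a_def by simp
qed

lemma quadratic_form_funpow_growth:
  assumes x: "x \<in> D" and E_bound: "\<And>z. norm (E z) \<le> K * norm z" and "0 \<le> K"
  obtains C where "\<And>k. Re (A ((E^^k) x) ((E^^k) x)) \<le> C * (K^2)^k"
proof -
  obtain M where M: "\<And>z. cmod (A x z) \<le> M * norm z"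
    using lin x unfolding lin_op_dual_def cdual_def by blast
  have funpow_bound: "norm ((E^^k) z) \<le> K^k * norm z" for k z
  proof (induction k)
    case (Suc k)
    have "norm ((E^^Suc k) z) \<le> K * norm ((E^^k) z)" using E_bound by simp
    also have "\<dots> \<le> K * (K^k * norm z)" using Suc \<open>0 \<le> K\<close> by (simp add: mult_left_mono)
    finally show ?case by simp
  qed simp
  have "Re (A ((E^^k) x) ((E^^k) x)) \<le> (max M 0 * norm x) * (K^2)^k" for k
  proof -
    have "Re (A ((E^^k) x) ((E^^k) x)) \<le> cmod (A x ((E^^k) ((E^^k) x)))"
      using funpow_intertwine[OF x funpow_invariant[OF x]] complex_Re_le_cmod by metis
    also have "\<dots> \<le> max M 0 * norm ((E^^(k+k)) x)"
      using M[of "(E^^(k+k)) x"] by (simp add: funpow_add mult_right_mono order_trans)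
    also have "\<dots> \<le> max M 0 * (K^(k+k) * norm x)"
      using funpow_bound by (simp add: mult_left_mono)
    finally show ?thesis
      by (simp add: power_mult[symmetric] mult_2[symmetric] mult.commute mult.left_commute)
  qed
  then show thesis by (rule that)
qed

lemma HA_norm_apply_le:
  assumes x: "x \<in> D" and E_bound: "\<And>z. norm (E z) \<le> K * norm z" and K: "0 < K"
  shows "HA_norm A (E x) \<le> K * HA_norm A x"
proof -
  define a where "a k = Re (A ((E^^k) x) ((E^^k) x))" for k
  obtain C where growth: "\<And>k. a k \<le> C * (K^2)^k"
    using quadratic_form_funpow_growth[OF x E_bound] K unfolding a_def by (meson less_imp_le)
  have nonneg: "0 \<le> a k" for k
    using pos funpow_invariant[OF x] unfolding a_def positive_op_def by blast
  have conv: "(a (Suc n))^2 \<le> a n * a (Suc (Suc n))" for n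
    unfolding a_def by (rule quadratic_form_funpow_log_convex[OF x])
  have "a 1 \<le> K^2 * a 0"
    using log_convex_ratio_le_growth_rate[OF nonneg conv growth] K by simp
  then have "sqrt (a 1) \<le> sqrt (K^2 * a 0)" by (rule real_sqrt_le_mono)
  then show ?thesis using K unfolding HA_norm_def a_def by (simp add: real_sqrt_mult)
qed

end

theorem lemma4:
  fixes sm :: "complex \<Rightarrow> 'a::banach \<Rightarrow> 'a"
    and D :: "'a set" and A :: "'a \<Rightarrow> 'a \<Rightarrow> complex" and E :: "'a \<Rightarrow> 'a"
  assumes "complex_scaling sm"
    and "reflexive_space sm"
    and "lin_op_dual sm D A"
    and "positive_op D A"
    and "self_adjoint_op sm D A"
    and "bounded_clinear_op sm E"
    and "E ` D \<subseteq> D"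
    and "\<forall>x\<in>D. E x \<in> D \<and> (\<lambda>z. A x (E z)) = A (E x)"
  shows "\<exists>Eh :: ('a \<Rightarrow> complex) \<Rightarrow> ('a \<Rightarrow> complex).
           (\<forall>x\<in>D. Eh (A x) = A (E x)) \<and>
           (\<forall>u\<in>A ` D. \<forall>v\<in>A ` D. Eh (\<lambda>z. u z + v z) = (\<lambda>z. Eh u z + Eh v z)) \<and>
           (\<forall>c. \<forall>u\<in>A ` D. Eh (\<lambda>z. c * u z) = (\<lambda>z. c * Eh u z)) \<and>
           (\<exists>C\<ge>0. \<forall>x\<in>D. HA_norm A (E x) \<le> C * HA_norm A x)"
proof (intro exI[of _ "\<lambda>u z. u (E z)"] conjI)
  have intertwine: "\<And>x z. x \<in> D \<Longrightarrow> A x (E z) = A (E x) z"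
    using assms(8) by metis
  obtain K where K: "0 < K" "\<And>z. norm (E z) \<le> K * norm z"
    using assms(6) bounded_linear.pos_bounded unfolding bounded_clinear_op_def
    by (metis mult.commute)
  show "\<exists>C\<ge>0. \<forall>x\<in>D. HA_norm A (E x) \<le> C * HA_norm A x"
    using HA_norm_apply_le[OF assms(3,4,7) intertwine _ K(2,1)] K(1) by (meson less_imp_le)
  show "\<forall>x\<in>D. (\<lambda>z. A x (E z)) = A (E x)" using assms(8) by blast
qed auto

end
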